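(* Let $d\ge2$ and let $L_1,\dots,L_k\subset\mathbb R^d$ be linear subspaces with $\dim L_i\ge2$, $A_i=L_i^\perp$, and assume $L_i\cap L_j\ne\{0\}$ for all $1\le i,j\le k$. Let $\mathcal G_i=\{U\in SO(d): U|_{A_i}=\mathrm{Id}_{A_i}\}$ and let $\mathcal G\subset SO(d)$ be the subgroup generated by $\mathcal G_1,\dots,\mathcal G_k$. Then $\mathcal G$ acts transitively on the unit sphere $\mathbb S^{d-1}$ if and only if $\operatorname{span}\{L_1,\dots,L_k\}=\mathbb R^d$, which in turn is equivalent to $\bigcap_{i=1}^k A_i=\{0\}$. *)

theory Defs
  imports "HOL-Analysis.Analysis"
begin

definition SO :: "(real^'n^'n) set" where
  "SO = {U. orthogonal_matrix U \<and> det U = 1}"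

definition fixing_group :: "(real^'n) set \<Rightarrow> (real^'n^'n) set" where
  "fixing_group A = {U \<in> SO. \<forall>a\<in>A. U *v a = a}"

definition generated_subgroup :: "(real^'n^'n) set \<Rightarrow> (real^'n^'n) set" where
  "generated_subgroup S = {U. \<forall>H. H \<subseteq> SO \<and> mat 1 \<in> H \<and> (\<forall>X\<in>H. \<forall>Y\<in>H. X ** Y \<in> H)
      \<and> (\<forall>X\<in>H. matrix_inv X \<in> H) \<and> S \<subseteq> H \<longrightarrow> U \<in> H}"

definition transitive_on_sphere :: "(real^'n^'n) set \<Rightarrow> bool" where
  "transitive_on_sphere G = (\<forall>x y. norm x = 1 \<and> norm y = 1 \<longrightarrow> (\<exists>U\<in>G. U *v x = y))"

end

theory Submission
  imports Defs
begin

(* Say that G moves y to y' along a subspace W if some U \<in> G fixes the orthogonal complement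
   of W pointwise and maps y to y', and that G is transitive along W if it does so whenever
   |y| = |y'| and y - y' \<in> W.  The generators fixing L_i^\<bottom> make G transitive along L_i: as
   dim L_i \<ge> 2, two reflections along vectors of L_i compose to a rotation moving y to y'.
   If G is transitive along W and along L, dim W \<ge> 2 and W \<inter> L contains a unit vector e,
   then G is transitive along span (W \<union> L): a move along W brings every unit vector of
   span (W \<union> L) into an orthonormal frame (e, u, n) with u \<in> W, n \<perp> W and r u + n \<in> L.  In
   this frame moves along W are the rotations about n and moves along L the rotations about
   r n - u, and alternating the two reaches e from every point of the unit sphere.  Since every
   L_i meets L_1, induction makes G transitive along span (\<Union> L_i).  Conversely, a nonzero
   vector orthogonal to all L_i is fixed by every generator, so G cannot map it to its negative. *)

lemma orthogonal_comp_decomp: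
  fixes W :: "'a::euclidean_space set"
  assumes "subspace W"
  obtains p q where "p \<in> W" "q \<in> orthogonal_comp W" "x = p + q"
proof -
  have "x \<in> W + orthogonal_comp W"
    using subspace_sum_orthogonal_comp[OF assms] by simp
  then show thesis
    using that by (auto elim: set_plus_elim)
qed

lemma orthogonal_comp_span: "orthogonal_comp (span S) = orthogonal_comp S"
proof
  show "orthogonal_comp (span S) \<subseteq> orthogonal_comp S"
    by (rule orthogonal_comp_anti_mono[OF span_superset])
  show "orthogonal_comp S \<subseteq> orthogonal_comp (span S)"
    unfolding orthogonal_comp_def using orthogonal_to_span orthogonal_commute by blast
qed

lemma span_eq_UNIV_iff_orthogonal_comp:
  fixes S :: "'a::euclidean_space set"
  shows "span S = UNIV \<longleftrightarrow> orthogonal_comp S = {0}"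
proof
  assume "span S = UNIV"
  then show "orthogonal_comp S = {0}"
    by (metis orthogonal_comp_span orthogonal_comp_UNIV)
next
  assume "orthogonal_comp S = {0}"
  then have "orthogonal_comp (orthogonal_comp (span S)) = UNIV"
    by (simp add: orthogonal_comp_span)
  then show "span S = UNIV"
    by (simp add: orthogonal_comp_self)
qed

lemma span_Un_span: "span (span A \<union> B) = span (A \<union> B)"
  unfolding span_eq using span_mono[of A "A \<union> B"] span_superset[of "A \<union> B"]
    span_superset[of A] span_superset[of "span A \<union> B"] by blast

lemma unit_vector_orthogonal_in_subspace:
  fixes W :: "'a::euclidean_space set"
  assumes "subspace W" "dim W \<ge> 2"
  obtains f where "f \<in> W" "norm f = 1" "f \<bullet> x = 0"
proof -
  have span_W: "span W = W"
    using assms(1) by (simp add: span_eq_iff)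
  obtain p z where "p \<in> W" "z \<in> orthogonal_comp W" "x = p + z"
    using orthogonal_comp_decomp[OF assms(1)] .
  have "dim {p} < dim W"
    using dim_le_card'[of "{p}"] assms(2) by simp
  then have "span {p} \<subset> W"
    using \<open>p \<in> W\<close> span_mono[of "{p}" W]
    by (metis span_W dim_span psubsetI empty_subsetI insert_subset order_less_irrefl)
  then obtain f where "f \<noteq> 0" "f \<in> W" "\<And>y. y \<in> span {p} \<Longrightarrow> orthogonal f y"
    using orthogonal_to_subspace_exists_gen[of "{p}" W, unfolded span_W] by metis
  moreover have "f \<bullet> x = f \<bullet> p + f \<bullet> z"
    by (simp add: \<open>x = p + z\<close> inner_add_right)
  ultimately have "f \<bullet> x = 0"
    using \<open>z \<in> orthogonal_comp W\<close> by (simp add: span_base orthogonal_def orthogonal_comp_def)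
  then show thesis
    using \<open>f \<noteq> 0\<close> \<open>f \<in> W\<close> assms(1) by (intro that[of "f /\<^sub>R norm f"]) (simp_all add: subspace_scale)
qed

(* Write n = w + l with w \<in> W and l \<in> L; removing the e-component of l leaves a vector of L
   that differs from n by a vector of W orthogonal to e. *)
lemma span_Un_orthogonal_lift:
  fixes W L :: "'a::euclidean_space set"
  assumes W: "subspace W" "dim W \<ge> 2" and L: "subspace L"
    and e: "e \<in> W" "e \<in> L" "e \<bullet> e = 1"
    and n: "n \<in> span (W \<union> L)" "n \<in> orthogonal_comp W"
  obtains u r where "u \<in> W" "u \<bullet> u = 1" "u \<bullet> e = 0" "r *\<^sub>R u + n \<in> L"
proof -
  have "span W = W" "span L = L"
    using W(1) L by (simp_all add: span_eq_iff)
  then obtain w l where "w \<in> W" "l \<in> L" "n = w + l"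
    using n(1) unfolding span_Un by blast
  define l0 where "l0 = l - (l \<bullet> e) *\<^sub>R e"
  define w0 where "w0 = l0 - n"
  have "l0 \<in> L"
    using \<open>l \<in> L\<close> e(2) L by (simp add: l0_def subspace_diff subspace_scale)
  have "w0 = - ((l \<bullet> e) *\<^sub>R e) - w"
    by (simp add: w0_def l0_def \<open>n = w + l\<close>)
  then have "w0 \<in> W"
    using \<open>w \<in> W\<close> e(1) W(1) by (simp add: subspace_diff subspace_neg subspace_scale)
  have "n \<bullet> e = 0"
    using n(2) e(1) by (simp add: orthogonal_comp_def orthogonal_def inner_commute)
  then have "w0 \<bullet> e = 0"
    using e(3) by (simp add: w0_def l0_def inner_diff_left)
  show thesis
  proof (cases "w0 = 0")
    case True
    obtain u where "u \<in> W" "norm u = 1" "u \<bullet> e = 0"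
      using unit_vector_orthogonal_in_subspace[OF W(1,2)] by blast
    then show thesis
      using that[of u 0] \<open>l0 \<in> L\<close> True by (simp add: w0_def norm_eq_1)
  next
    case False
    have "norm (w0 /\<^sub>R norm w0) = 1"
      using False by simp
    then have "(w0 /\<^sub>R norm w0) \<bullet> (w0 /\<^sub>R norm w0) = 1"
      by (simp only: norm_eq_1)
    moreover have "norm w0 *\<^sub>R (w0 /\<^sub>R norm w0) + n \<in> L"
      using False \<open>l0 \<in> L\<close> by (simp add: w0_def)
    ultimately show thesis
      using that[of "w0 /\<^sub>R norm w0" "norm w0"] \<open>w0 \<in> W\<close> \<open>w0 \<bullet> e = 0\<close> W(1)
      by (simp add: subspace_scale)
  qed
qed

definition SO_subgroup :: "(real^'n^'n) set \<Rightarrow> bool" where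
  "SO_subgroup H \<longleftrightarrow> H \<subseteq> SO \<and> mat 1 \<in> H \<and> (\<forall>X\<in>H. \<forall>Y\<in>H. X ** Y \<in> H)
     \<and> (\<forall>X\<in>H. matrix_inv X \<in> H)"

lemma orthogonal_matrix_inv:
  fixes U :: "real^'n^'n"
  assumes "orthogonal_matrix U"
  shows "matrix_inv U = transpose U"
  unfolding matrix_inv_def
proof (rule some_equality)
  have UU: "U ** transpose U = mat 1" "transpose U ** U = mat 1"
    using assms by (simp_all add: orthogonal_matrix_def)
  then show "U ** transpose U = mat 1 \<and> transpose U ** U = mat 1"
    by simp
  fix V
  assume "U ** V = mat 1 \<and> V ** U = mat 1"
  then show "V = transpose U"
    by (metis UU(2) matrix_mul_assoc matrix_mul_rid)
qed

lemma orthogonal_matrix_inv_cancel: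
  fixes U :: "real^'n^'n"
  assumes "orthogonal_matrix U"
  shows "matrix_inv U *v (U *v x) = x"
  using assms by (simp add: orthogonal_matrix_inv matrix_vector_mul_assoc orthogonal_matrix_def
      del: transpose_matrix_vector)

lemma mat_1_in_SO: "mat 1 \<in> SO"
  by (simp add: SO_def orthogonal_matrix_id det_I)

lemma SO_mult: "X \<in> SO \<Longrightarrow> Y \<in> SO \<Longrightarrow> X ** Y \<in> SO"
  by (auto simp: SO_def orthogonal_matrix_mul det_mul)

lemma SO_matrix_inv: "X \<in> SO \<Longrightarrow> matrix_inv X \<in> SO"
  by (auto simp: SO_def orthogonal_matrix_inv)

lemma SO_subgroup_SO: "SO_subgroup SO"
  by (simp add: SO_subgroup_def mat_1_in_SO SO_mult SO_matrix_inv)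

lemma SO_subgroup_stabilizer: "SO_subgroup {U \<in> SO. U *v w = w}"
  unfolding SO_subgroup_def
proof (intro conjI ballI)
  fix X Y
  assume X: "X \<in> {U \<in> SO. U *v w = w}" and Y: "Y \<in> {U \<in> SO. U *v w = w}"
  have "(X ** Y) *v w = X *v (Y *v w)"
    by (simp add: matrix_vector_mul_assoc)
  then show "X ** Y \<in> {U \<in> SO. U *v w = w}"
    using X Y by (simp add: SO_mult)
  have "orthogonal_matrix X" "X *v w = w"
    using X by (simp_all add: SO_def)
  then have "matrix_inv X *v w = w"
    using orthogonal_matrix_inv_cancel[of X w] by simp
  then show "matrix_inv X \<in> {U \<in> SO. U *v w = w}"
    using X by (simp add: SO_matrix_inv)
qed (simp_all add: mat_1_in_SO)

lemma generated_subgroup_altdef: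
  "generated_subgroup S = {U. \<forall>H. SO_subgroup H \<and> S \<subseteq> H \<longrightarrow> U \<in> H}"
  unfolding generated_subgroup_def SO_subgroup_def by (simp add: conj_assoc)

lemma generated_subgroup_superset: "S \<subseteq> generated_subgroup S"
  unfolding generated_subgroup_altdef by blast

lemma generated_subgroup_minimal: "SO_subgroup H \<Longrightarrow> S \<subseteq> H \<Longrightarrow> generated_subgroup S \<subseteq> H"
  unfolding generated_subgroup_altdef by blast

lemma SO_subgroup_generated_subgroup:
  assumes "S \<subseteq> SO"
  shows "SO_subgroup (generated_subgroup S)"
  unfolding SO_subgroup_def
proof (intro conjI ballI)
  show "generated_subgroup S \<subseteq> SO"
    using generated_subgroup_minimal[OF SO_subgroup_SO assms] .
  show "mat 1 \<in> generated_subgroup S"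
    unfolding generated_subgroup_altdef SO_subgroup_def by blast
  fix X Y
  assume "X \<in> generated_subgroup S" "Y \<in> generated_subgroup S"
  then have "X \<in> H" "Y \<in> H" if "SO_subgroup H" "S \<subseteq> H" for H
    using that unfolding generated_subgroup_altdef by blast+
  then show "X ** Y \<in> generated_subgroup S" "matrix_inv X \<in> generated_subgroup S"
    unfolding generated_subgroup_altdef SO_subgroup_def by blast+
qed

lemma generated_subgroup_fixes_vector:
  assumes "S \<subseteq> SO" "\<And>U. U \<in> S \<Longrightarrow> U *v w = w" "U \<in> generated_subgroup S"
  shows "U *v w = w"
  using generated_subgroup_minimal[OF SO_subgroup_stabilizer, of S w] assms by blast

lemma not_transitive_on_sphere_if_fixed_vector:
  assumes "w \<noteq> 0" and fixed: "\<And>U. U \<in> G \<Longrightarrow> U *v w = w"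
  shows "\<not> transitive_on_sphere G"
proof
  let ?w = "w /\<^sub>R norm w"
  assume "transitive_on_sphere G"
  moreover have "norm ?w = 1" "norm (- ?w) = 1"
    using assms(1) by simp_all
  ultimately obtain U where "U \<in> G" "U *v ?w = - ?w"
    unfolding transitive_on_sphere_def by blast
  then have "?w = - ?w"
    using fixed by (simp add: matrix_vector_mult_scaleR)
  then have "?w = 0"
    by (simp add: eq_neg_iff_add_eq_0 flip: scaleR_2)
  then show False
    using \<open>norm ?w = 1\<close> by simp
qed

section \<open>Rotations inside a subspace\<close>

(* Q D Q^T, where D negates the k-th coordinate and Q maps axis k 1 to q. *)
lemma reflection_matrix_exists:
  fixes q :: "real^'n"
  assumes "norm q = 1"
  obtains R where "orthogonal_matrix R" "det R = -1" "\<And>x. R *v x = x - (2 * (x \<bullet> q)) *\<^sub>R q"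
proof -
  obtain k :: 'n where True by simp
  obtain Q where Q: "orthogonal_matrix Q" "Q *v axis k 1 = q"
    using orthogonal_matrix_exists_basis[OF assms] by metis
  define D :: "real^'n^'n" where "D = (\<chi> i j. if i = j then if i = k then -1 else 1 else 0)"
  have D_mv: "D *v y = y - (2 * y $ k) *\<^sub>R axis k 1" for y
    by (auto simp: vec_eq_iff D_def matrix_vector_mult_def axis_def if_distrib[of "\<lambda>a. a * _"]
        cong: if_cong)
  have "D ** D = mat 1"
    by (rule matrix_eq[THEN iffD2]) (simp add: D_mv flip: matrix_vector_mul_assoc)
  moreover have "transpose D = D"
    by (auto simp: D_def transpose_def vec_eq_iff)
  ultimately have D_orth: "orthogonal_matrix D"
    by (simp add: orthogonal_matrix_def)
  have "det D = prod (\<lambda>i. D $ i $ i) UNIV"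
    by (rule det_diagonal) (simp add: D_def)
  then have D_det: "det D = -1"
    by (simp add: D_def prod.If_cases)
  have "det Q * det Q = 1"
    using det_orthogonal_matrix[OF Q(1)] by auto
  show thesis
  proof
    show "orthogonal_matrix (Q ** D ** transpose Q)"
      by (intro orthogonal_matrix_mul Q(1) D_orth) (simp add: Q(1))
    show "det (Q ** D ** transpose Q) = -1"
      using \<open>det Q * det Q = 1\<close> by (simp add: det_mul det_transpose D_det)
    fix x
    have "(transpose Q *v x) $ k = x \<bullet> q"
      by (simp add: cart_eq_inner_axis dot_lmul_matrix Q(2))
    moreover have "Q *v (transpose Q *v x) = x"
      using Q(1)
      by (simp add: matrix_vector_mul_assoc orthogonal_matrix_def del: transpose_matrix_vector)
    ultimately show "(Q ** D ** transpose Q) *v x = x - (2 * (x \<bullet> q)) *\<^sub>R q"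
      using Q(2) by (simp add: D_mv matrix_vector_mult_diff_distrib matrix_vector_mult_scaleR
          del: transpose_matrix_vector flip: matrix_vector_mul_assoc)
  qed
qed

lemma reflection_matrix_swap:
  fixes y y' :: "real^'n"
  assumes "norm y = norm y'" "y \<noteq> y'"
  obtains R where "orthogonal_matrix R" "det R = -1" "R *v y = y'"
    "\<And>v. v \<bullet> (y - y') = 0 \<Longrightarrow> R *v v = v"
proof -
  define d where "d = y - y'"
  have "d \<noteq> 0"
    using assms(2) by (simp add: d_def)
  then have unit_d: "norm (d /\<^sub>R norm d) = 1"
    by simp
  obtain R where R: "orthogonal_matrix R" "det R = -1"
    "\<And>x. R *v x = x - (2 * (x \<bullet> (d /\<^sub>R norm d))) *\<^sub>R (d /\<^sub>R norm d)"
    using reflection_matrix_exists[OF unit_d] by blast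
  have "y' \<bullet> y' = y \<bullet> y"
    using assms(1) by (metis power2_norm_eq_inner)
  then have "d \<bullet> d = 2 * (y \<bullet> d)"
    by (simp add: d_def inner_diff_left inner_diff_right inner_commute)
  then have norm_d: "norm d * norm d = 2 * (y \<bullet> d)"
    by (simp add: dot_square_norm power2_eq_square)
  have "(2 * (y \<bullet> (d /\<^sub>R norm d))) *\<^sub>R (d /\<^sub>R norm d) = (2 * (y \<bullet> d) / (norm d * norm d)) *\<^sub>R d"
    by (simp add: field_simps)
  also have "\<dots> = d"
    using \<open>d \<noteq> 0\<close> by (simp flip: norm_d)
  finally have "R *v y = y - d"
    by (simp only: R(3))
  then have "R *v y = y'"
    by (simp add: d_def)
  then show thesis
    by (rule that[OF R(1,2)]) (simp add: R(3) d_def)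
qed

(* The reflection swapping y and y' composed with a reflection fixing y' has determinant 1. *)
lemma rotation_in_subspace_exists:
  fixes L :: "(real^'n) set"
  assumes L: "subspace L" "dim L \<ge> 2" and "norm y = norm y'" "y - y' \<in> L"
  obtains U where "U \<in> fixing_group (orthogonal_comp L)" "U *v y = y'"
proof (cases "y = y'")
  case True
  then show thesis
    using that[of "mat 1"] mat_1_in_SO by (simp add: fixing_group_def)
next
  case False
  obtain R1 where R1: "orthogonal_matrix R1" "det R1 = -1" "R1 *v y = y'"
    "\<And>v. v \<bullet> (y - y') = 0 \<Longrightarrow> R1 *v v = v"
    using reflection_matrix_swap[OF \<open>norm y = norm y'\<close> False] by blast
  obtain f where f: "f \<in> L" "norm f = 1" "f \<bullet> y' = 0"
    using unit_vector_orthogonal_in_subspace[OF L] by blast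
  obtain R2 where R2: "orthogonal_matrix R2" "det R2 = -1" "\<And>x. R2 *v x = x - (2 * (x \<bullet> f)) *\<^sub>R f"
    using reflection_matrix_exists[OF f(2)] by blast
  show thesis
  proof (rule that[of "R2 ** R1"])
    have "(R2 ** R1) *v v = v" if "v \<in> orthogonal_comp L" for v
    proof -
      have "v \<bullet> (y - y') = 0" "v \<bullet> f = 0"
        using that f(1) \<open>y - y' \<in> L\<close>
        by (auto simp: orthogonal_comp_def orthogonal_def inner_commute)
      then show ?thesis
        by (simp add: R1(4) R2(3) flip: matrix_vector_mul_assoc)
    qed
    then show "R2 ** R1 \<in> fixing_group (orthogonal_comp L)"
      using R1 R2 by (simp add: fixing_group_def SO_def orthogonal_matrix_mul det_mul)
    show "(R2 ** R1) *v y = y'"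
      using f(3) by (simp add: R1(3) R2(3) inner_commute flip: matrix_vector_mul_assoc)
  qed
qed

section \<open>Moving vectors along a subspace\<close>

definition moves_within :: "(real^'n^'n) set \<Rightarrow> (real^'n) set \<Rightarrow> real^'n \<Rightarrow> real^'n \<Rightarrow> bool" where
  "moves_within G W y y' \<longleftrightarrow> (\<exists>U\<in>G. (\<forall>v\<in>orthogonal_comp W. U *v v = v) \<and> U *v y = y')"

definition transitive_along :: "(real^'n^'n) set \<Rightarrow> (real^'n) set \<Rightarrow> bool" where
  "transitive_along G W \<longleftrightarrow> (\<forall>y y'. norm y = norm y' \<longrightarrow> y - y' \<in> W \<longrightarrow> moves_within G W y y')"

lemma moves_within_refl: "SO_subgroup G \<Longrightarrow> moves_within G W y y"
  unfolding moves_within_def SO_subgroup_def using matrix_vector_mul_lid by blast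

lemma moves_within_sym:
  assumes G: "SO_subgroup G" and "moves_within G W y y'"
  shows "moves_within G W y' y"
proof -
  obtain U where U: "U \<in> G" "\<And>v. v \<in> orthogonal_comp W \<Longrightarrow> U *v v = v" "U *v y = y'"
    using assms(2) unfolding moves_within_def by blast
  have "orthogonal_matrix U" "matrix_inv U \<in> G"
    using U(1) G by (auto simp: SO_subgroup_def SO_def)
  then show ?thesis
    unfolding moves_within_def using U(2,3) orthogonal_matrix_inv_cancel by metis
qed

lemma moves_within_trans:
  assumes G: "SO_subgroup G" and "moves_within G W x y" "moves_within G W y z"
  shows "moves_within G W x z"
proof -
  obtain U V where "U \<in> G" "V \<in> G" "\<And>v. v \<in> orthogonal_comp W \<Longrightarrow> U *v v = v \<and> V *v v = v"
    "U *v x = y" "V *v y = z"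
    using assms(2,3) unfolding moves_within_def by blast
  moreover have "V ** U \<in> G"
    using G \<open>U \<in> G\<close> \<open>V \<in> G\<close> by (simp add: SO_subgroup_def)
  moreover have "(V ** U) *v w = V *v (U *v w)" for w
    by (simp add: matrix_vector_mul_assoc)
  ultimately show ?thesis
    unfolding moves_within_def by (metis (no_types, lifting))
qed

lemma moves_within_mono: "W \<subseteq> W' \<Longrightarrow> moves_within G W y y' \<Longrightarrow> moves_within G W' y y'"
  unfolding moves_within_def using orthogonal_comp_anti_mono by blast

lemma moves_within_scaleR_add:
  assumes "moves_within G W y y'" "g \<in> orthogonal_comp W"
  shows "moves_within G W (c *\<^sub>R y + g) (c *\<^sub>R y' + g)"
  using assms unfolding moves_within_def
  by (auto simp: matrix_vector_right_distrib matrix_vector_mult_scaleR)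

lemma transitive_along_moves_within:
  assumes "transitive_along G W" "W \<subseteq> W'" "norm y = norm y'" "y - y' \<in> W"
  shows "moves_within G W' y y'"
  using assms moves_within_mono unfolding transitive_along_def by blast

lemma transitive_along_moves_to_line:
  assumes "transitive_along G W" "subspace W" "p \<in> W" "q \<in> orthogonal_comp W" "e \<in> W" "norm e = 1"
  shows "moves_within G W (p + q) (norm p *\<^sub>R e + q)"
proof -
  have "moves_within G W p (norm p *\<^sub>R e)"
    using assms(1-3,5,6) by (simp add: transitive_along_def subspace_diff subspace_scale)
  from moves_within_scaleR_add[OF this assms(4), of 1] show ?thesis
    by simp
qed

lemma transitive_on_sphere_if_transitive_along_UNIV:
  "transitive_along G UNIV \<Longrightarrow> transitive_on_sphere G"
  unfolding transitive_on_sphere_def transitive_along_def moves_within_def by simp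

lemma transitive_along_fixing_group:
  fixes L :: "(real^'n) set"
  assumes "subspace L" "dim L \<ge> 2" "fixing_group (orthogonal_comp L) \<subseteq> G"
  shows "transitive_along G L"
  unfolding transitive_along_def
proof (intro allI impI)
  fix y y' :: "real^'n"
  assume "norm y = norm y'" "y - y' \<in> L"
  then obtain U where "U \<in> fixing_group (orthogonal_comp L)" "U *v y = y'"
    using rotation_in_subspace_exists[OF assms(1,2)] by blast
  then show "moves_within G L y y'"
    using assms(3) unfolding moves_within_def fixing_group_def by blast
qed

lemma transitive_along_unit_sphereI:
  fixes W :: "(real^'n) set"
  assumes G: "SO_subgroup G" and W: "subspace W"
    and units: "\<And>h. h \<in> W \<Longrightarrow> norm h = 1 \<Longrightarrow> moves_within G W h e"
  shows "transitive_along G W"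
proof -
  have to_e: "moves_within G W (h + g) (norm h *\<^sub>R e + g)"
    if "h \<in> W" "g \<in> orthogonal_comp W" for h g
  proof (cases "h = 0")
    case True
    then show ?thesis
      using moves_within_refl[OF G] by simp
  next
    case False
    then have "moves_within G W (h /\<^sub>R norm h) e"
      using units W \<open>h \<in> W\<close> by (simp add: subspace_scale)
    then have "moves_within G W (norm h *\<^sub>R (h /\<^sub>R norm h) + g) (norm h *\<^sub>R e + g)"
      using \<open>g \<in> orthogonal_comp W\<close> by (rule moves_within_scaleR_add)
    then show ?thesis
      using False by simp
  qed
  show ?thesis
    unfolding transitive_along_def
  proof (intro allI impI)
    fix y y' :: "real^'n"
    assume "norm y = norm y'" "y - y' \<in> W"
    obtain h g where h: "h \<in> W" and g: "g \<in> orthogonal_comp W" and "y = h + g"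
      using orthogonal_comp_decomp[OF W] .
    define h' where "h' = h - (y - y')"
    have "h' \<in> W"
      using W h \<open>y - y' \<in> W\<close> by (simp add: h'_def subspace_diff)
    have "y' = h' + g"
      by (simp add: h'_def \<open>y = h + g\<close>)
    have "orthogonal h g" "orthogonal h' g"
      using g h \<open>h' \<in> W\<close> by (simp_all add: orthogonal_comp_def)
    then have "(norm y)\<^sup>2 = (norm h)\<^sup>2 + (norm g)\<^sup>2" "(norm y')\<^sup>2 = (norm h')\<^sup>2 + (norm g)\<^sup>2"
      using \<open>y = h + g\<close> \<open>y' = h' + g\<close> by (simp_all add: norm_add_Pythagorean)
    then have "norm h = norm h'"
      using \<open>norm y = norm y'\<close> by (simp add: power2_eq_iff_nonneg)
    then show "moves_within G W y y'"
      using to_e[OF h g] moves_within_sym[OF G to_e[OF \<open>h' \<in> W\<close> g]]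
        \<open>y = h + g\<close> \<open>y' = h' + g\<close> by (metis moves_within_trans[OF G])
  qed
qed

section \<open>Rotations about two axes act transitively on the 2-sphere\<close>

lemma sphere_circles_meet:
  fixes c s x w :: real
  assumes "c\<^sup>2 + s\<^sup>2 = 1" "s > 0" "x\<^sup>2 - 2 * c * x * w + w\<^sup>2 \<le> s\<^sup>2"
  obtains a b where "a\<^sup>2 + b\<^sup>2 + x\<^sup>2 = 1" "c * x - s * b = w"
proof -
  define b where "b = (c * x - w) / s"
  have "s\<^sup>2 * b\<^sup>2 = (c * x - w)\<^sup>2"
    using \<open>s > 0\<close> by (simp add: b_def power_divide)
  then have "s\<^sup>2 * (x\<^sup>2 + b\<^sup>2) = s\<^sup>2 * x\<^sup>2 + (c * x - w)\<^sup>2"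
    by (simp add: distrib_left)
  also have "\<dots> = (c\<^sup>2 + s\<^sup>2) * x\<^sup>2 - 2 * c * x * w + w\<^sup>2"
    by (simp add: power2_eq_square algebra_simps)
  also have "\<dots> \<le> s\<^sup>2 * 1"
    using assms(1,3) by simp
  finally have "s\<^sup>2 * (x\<^sup>2 + b\<^sup>2) \<le> s\<^sup>2 * 1" .
  then have "x\<^sup>2 + b\<^sup>2 \<le> 1"
    using \<open>s > 0\<close> by (simp add: mult_le_cancel_left_pos)
  then show thesis
    using \<open>s > 0\<close> by (intro that[of "sqrt (1 - x\<^sup>2 - b\<^sup>2)" b]) (simp_all add: b_def)
qed

lemma latitude_circles_meet_scaled:
  fixes c s x :: real
  assumes "c\<^sup>2 + s\<^sup>2 = 1" "\<bar>x\<bar> \<le> 1"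
  shows "x\<^sup>2 - 2 * c * x * (c * x) + (c * x)\<^sup>2 \<le> s\<^sup>2"
proof -
  have "x\<^sup>2 - 2 * c * x * (c * x) + (c * x)\<^sup>2 = (1 - c\<^sup>2) * x\<^sup>2"
    by (simp add: power2_eq_square algebra_simps)
  also have "\<dots> = s\<^sup>2 * x\<^sup>2"
    using assms(1) by simp
  also have "\<dots> \<le> s\<^sup>2"
    using assms(2) by (simp add: mult_left_le flip: abs_square_le_1)
  finally show ?thesis .
qed

(* A x (resp. B w) says that all points of latitude x about the first axis (resp. w about the
   second) have the property, c being the cosine of the angle between the axes.  The two circles
   meet iff x^2 - 2cxw + w^2 \<le> s^2, so latitude x is reached from latitude c x, and c^n x
   tends to 0. *)
lemma latitude_zigzag:
  fixes c s :: real and A B :: "real \<Rightarrow> bool"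
  assumes cs: "c\<^sup>2 + s\<^sup>2 = 1" "s > 0" and "B 0"
    and A_if_B: "\<And>x w. B w \<Longrightarrow> x\<^sup>2 - 2 * c * x * w + w\<^sup>2 \<le> s\<^sup>2 \<Longrightarrow> A x"
    and B_if_A: "\<And>x w. A x \<Longrightarrow> x\<^sup>2 - 2 * c * x * w + w\<^sup>2 \<le> s\<^sup>2 \<Longrightarrow> B w"
    and "\<bar>z\<bar> \<le> 1"
  shows "A z"
proof -
  have "A 0"
    using A_if_B[OF \<open>B 0\<close>, of 0] by simp
  have "c\<^sup>2 < 1"
    using cs by (smt (verit) zero_less_power2)
  then have "\<bar>c\<bar> < 1"
    by (simp add: abs_square_less_1)
  have latitudes: "A x \<and> B x" if "\<bar>x\<bar> \<le> 1" "\<bar>c\<bar> ^ n * \<bar>x\<bar> \<le> s" for n x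
    using that
  proof (induction n arbitrary: x)
    case 0
    then have "x\<^sup>2 - 2 * c * x * 0 + 0\<^sup>2 \<le> s\<^sup>2" "0\<^sup>2 - 2 * c * 0 * x + x\<^sup>2 \<le> s\<^sup>2"
      using abs_le_square_iff[of x s] \<open>s > 0\<close> by simp_all
    then show ?case
      using A_if_B[OF \<open>B 0\<close>] B_if_A[OF \<open>A 0\<close>] by blast
  next
    case (Suc n)
    have "\<bar>c * x\<bar> \<le> 1" "\<bar>c\<bar> ^ n * \<bar>c * x\<bar> \<le> s"
      using Suc.prems \<open>\<bar>c\<bar> < 1\<close> by (simp_all add: abs_mult mult_le_one mult.left_commute)
    then have "A (c * x)" "B (c * x)"
      using Suc.IH by blast+
    moreover have meet: "x\<^sup>2 - 2 * c * x * (c * x) + (c * x)\<^sup>2 \<le> s\<^sup>2"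
      by (rule latitude_circles_meet_scaled[OF cs(1) Suc.prems(1)])
    moreover from meet have "(c * x)\<^sup>2 - 2 * c * (c * x) * x + x\<^sup>2 \<le> s\<^sup>2"
      by (simp add: algebra_simps)
    ultimately show ?case
      using A_if_B B_if_A by blast
  qed
  obtain n where "\<bar>c\<bar> ^ n < s"
    using real_arch_pow_inv[OF \<open>s > 0\<close> \<open>\<bar>c\<bar> < 1\<close>] by blast
  then have "\<bar>c\<bar> ^ n * \<bar>z\<bar> \<le> s"
    using \<open>\<bar>z\<bar> \<le> 1\<close> mult_left_le[of "\<bar>z\<bar>" "\<bar>c\<bar> ^ n"] by simp
  then show "A z"
    using latitudes \<open>\<bar>z\<bar> \<le> 1\<close> by blast
qed

(* In coordinates (a, b, z), rot1 rotates about the z-axis and rot2 about the axis (0, -1, r). *)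
lemma sphere_invariant_under_two_axes:
  fixes r :: real and P :: "real \<Rightarrow> real \<Rightarrow> real \<Rightarrow> bool"
  assumes P_pole: "P 1 0 0"
    and rot1: "\<And>a b z a' b'. P a' b' z \<Longrightarrow> a\<^sup>2 + b\<^sup>2 = a'\<^sup>2 + b'\<^sup>2 \<Longrightarrow> P a b z"
    and rot2: "\<And>a b z a' b' z'. P a' b' z' \<Longrightarrow> r * z - b = r * z' - b'
                 \<Longrightarrow> a\<^sup>2 + b\<^sup>2 + z\<^sup>2 = a'\<^sup>2 + b'\<^sup>2 + z'\<^sup>2 \<Longrightarrow> P a b z"
    and sphere: "a\<^sup>2 + b\<^sup>2 + z\<^sup>2 = 1"
  shows "P a b z"
proof -
  define N where "N = sqrt (1 + r\<^sup>2)"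
  define c where "c = r / N"
  define s where "s = 1 / N"
  have "N > 0"
    by (simp add: N_def add_pos_nonneg)
  then have cs: "c\<^sup>2 + s\<^sup>2 = 1" "s > 0"
    by (simp_all add: c_def s_def N_def power_divide add_divide_distrib[symmetric] add.commute)
  have rot2': "P a b z" if P': "P a' b' z'" and eq: "c * z - s * b = c * z' - s * b'"
      and norms: "a\<^sup>2 + b\<^sup>2 + z\<^sup>2 = a'\<^sup>2 + b'\<^sup>2 + z'\<^sup>2" for a b z a' b' z'
  proof (rule rot2[OF P' _ norms])
    have "c * z - s * b = (r * z - b) / N" "c * z' - s * b' = (r * z' - b') / N"
      by (simp_all add: c_def s_def diff_divide_distrib)
    then show "r * z - b = r * z' - b'"
      using eq \<open>N > 0\<close> by simp
  qed
  define A where "A x \<longleftrightarrow> (\<forall>a b. a\<^sup>2 + b\<^sup>2 + x\<^sup>2 = 1 \<longrightarrow> P a b x)" for x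
  define B where "B w \<longleftrightarrow> (\<forall>a b z. a\<^sup>2 + b\<^sup>2 + z\<^sup>2 = 1 \<longrightarrow> c * z - s * b = w \<longrightarrow> P a b z)" for w
  have "A z"
  proof (rule latitude_zigzag[OF cs])
    show "B 0"
      unfolding B_def using rot2'[OF P_pole] by simp
  next
    fix x w
    assume "B w" and meet: "x\<^sup>2 - 2 * c * x * w + w\<^sup>2 \<le> s\<^sup>2"
    obtain a' b' where "a'\<^sup>2 + b'\<^sup>2 + x\<^sup>2 = 1" "c * x - s * b' = w"
      using sphere_circles_meet[OF cs meet] .
    then show "A x"
      using \<open>B w\<close> rot1[of a' b' x] unfolding A_def B_def by force
  next
    fix x w
    assume "A x" and meet: "x\<^sup>2 - 2 * c * x * w + w\<^sup>2 \<le> s\<^sup>2"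
    obtain a' b' where "a'\<^sup>2 + b'\<^sup>2 + x\<^sup>2 = 1" "c * x - s * b' = w"
      using sphere_circles_meet[OF cs meet] .
    then show "B w"
      using \<open>A x\<close> rot2'[of a' b' x] unfolding A_def B_def by force
  next
    have "z\<^sup>2 \<le> 1"
      using sphere zero_le_power2[of a] zero_le_power2[of b] by linarith
    then show "\<bar>z\<bar> \<le> 1"
      by (simp add: abs_square_le_1)
  qed
  then show ?thesis
    using sphere by (simp add: A_def)
qed

section \<open>Gluing subspaces that share a line\<close>

lemma norm_orthonormal_combination:
  fixes e u n :: "'a::real_inner"
  assumes "e \<bullet> e = 1" "u \<bullet> u = 1" "n \<bullet> n = 1" "e \<bullet> u = 0" "e \<bullet> n = 0" "u \<bullet> n = 0"
  shows "norm (a *\<^sub>R e + b *\<^sub>R u + z *\<^sub>R n) = sqrt (a\<^sup>2 + b\<^sup>2 + z\<^sup>2)"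
  using assms
  by (simp add: norm_eq_sqrt_inner inner_add_left inner_add_right inner_commute power2_eq_square)

lemma moves_within_orthonormal_frame:
  fixes W L :: "(real^'n) set"
  assumes G: "SO_subgroup G" and W: "subspace W" "transitive_along G W"
    and L: "subspace L" "transitive_along G L"
    and orthonormal: "e \<bullet> e = 1" "u \<bullet> u = 1" "n \<bullet> n = 1" "e \<bullet> u = 0" "e \<bullet> n = 0" "u \<bullet> n = 0"
    and frame: "e \<in> W" "u \<in> W" "e \<in> L" "r *\<^sub>R u + n \<in> L"
    and sphere: "a\<^sup>2 + b\<^sup>2 + z\<^sup>2 = 1"
  shows "moves_within G (span (W \<union> L)) (a *\<^sub>R e + b *\<^sub>R u + z *\<^sub>R n) e"
proof -
  define pt where "pt a b z = a *\<^sub>R e + b *\<^sub>R u + z *\<^sub>R n" for a b z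
  have norm_pt: "norm (pt a b z) = norm (pt a' b' z')"
    if "a\<^sup>2 + b\<^sup>2 + z\<^sup>2 = a'\<^sup>2 + b'\<^sup>2 + z'\<^sup>2" for a b z a' b' z'
    using that by (simp add: pt_def norm_orthonormal_combination[OF orthonormal])
  have "W \<subseteq> span (W \<union> L)" "L \<subseteq> span (W \<union> L)"
    using span_superset[of "W \<union> L"] by blast+
  note W_move = transitive_along_moves_within[OF W(2) this(1)]
    and L_move = transitive_along_moves_within[OF L(2) this(2)]
  show ?thesis
    unfolding pt_def[symmetric]
  proof (rule sphere_invariant_under_two_axes[where r = r and
        P = "\<lambda>a b z. moves_within G (span (W \<union> L)) (pt a b z) e", OF _ _ _ sphere])
    show "moves_within G (span (W \<union> L)) (pt 1 0 0) e"
      using moves_within_refl[OF G] by (simp add: pt_def)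
  next
    fix a b z a' b'
    assume moves: "moves_within G (span (W \<union> L)) (pt a' b' z) e"
      and circle: "a\<^sup>2 + b\<^sup>2 = a'\<^sup>2 + b'\<^sup>2"
    have "pt a b z - pt a' b' z = (a - a') *\<^sub>R e + (b - b') *\<^sub>R u"
      by (simp add: pt_def algebra_simps)
    then have "pt a b z - pt a' b' z \<in> W"
      using frame W(1) by (simp add: subspace_add subspace_scale)
    moreover have "norm (pt a b z) = norm (pt a' b' z)"
      using circle by (intro norm_pt) simp
    ultimately show "moves_within G (span (W \<union> L)) (pt a b z) e"
      using moves_within_trans[OF G W_move moves] by simp
  next
    fix a b z a' b' z'
    assume moves: "moves_within G (span (W \<union> L)) (pt a' b' z') e"
      and axis: "r * z - b = r * z' - b'" and sphere': "a\<^sup>2 + b\<^sup>2 + z\<^sup>2 = a'\<^sup>2 + b'\<^sup>2 + z'\<^sup>2"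
    have b: "b = b' + r * (z - z')"
      using axis by (simp add: algebra_simps)
    have "pt a b z - pt a' b' z' = (a - a') *\<^sub>R e + (z - z') *\<^sub>R (r *\<^sub>R u + n)"
      unfolding b by (simp add: pt_def algebra_simps)
    then have "pt a b z - pt a' b' z' \<in> L"
      using frame L(1) by (simp add: subspace_add subspace_scale)
    with norm_pt[OF sphere'] show "moves_within G (span (W \<union> L)) (pt a b z) e"
      using moves_within_trans[OF G L_move moves] by simp
  qed
qed

lemma moves_within_orthogonal_direction:
  fixes W L :: "(real^'n) set"
  assumes G: "SO_subgroup G" and W: "subspace W" "dim W \<ge> 2" "transitive_along G W"
    and L: "subspace L" "transitive_along G L"
    and e: "e \<in> W" "e \<in> L" "e \<bullet> e = 1"
    and n: "n \<in> span (W \<union> L)" "n \<in> orthogonal_comp W" "n \<bullet> n = 1"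
    and circle: "a\<^sup>2 + z\<^sup>2 = 1"
  shows "moves_within G (span (W \<union> L)) (a *\<^sub>R e + z *\<^sub>R n) e"
proof -
  obtain u r where u: "u \<in> W" "u \<bullet> u = 1" "u \<bullet> e = 0" "r *\<^sub>R u + n \<in> L"
    using span_Un_orthogonal_lift[OF W(1,2) L(1) e n(1,2)] .
  have perp_n: "v \<bullet> n = 0" if "v \<in> W" for v
    using n(2) that by (simp add: orthogonal_comp_def orthogonal_def)
  have "moves_within G (span (W \<union> L)) (a *\<^sub>R e + 0 *\<^sub>R u + z *\<^sub>R n) e"
    using e u n(3) perp_n[OF e(1)] perp_n[OF u(1)] circle
    by (intro moves_within_orthonormal_frame[OF G W(1,3) L]) (simp_all add: inner_commute)
  then show ?thesis
    by simp
qed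

lemma transitive_along_span_Un:
  fixes W L :: "(real^'n) set"
  assumes G: "SO_subgroup G" and W: "subspace W" "dim W \<ge> 2" "transitive_along G W"
    and L: "subspace L" "transitive_along G L"
    and e: "e \<in> W" "e \<in> L" "e \<noteq> 0"
  shows "transitive_along G (span (W \<union> L))"
proof -
  define e1 where "e1 = e /\<^sub>R norm e"
  have "norm e1 = 1" "e1 \<in> W" "e1 \<in> L"
    using e W(1) L(1) by (simp_all add: e1_def subspace_scale)
  then have e1: "e1 \<bullet> e1 = 1" "e1 \<in> W" "e1 \<in> L"
    by (simp_all add: norm_eq_1)
  have "W \<subseteq> span (W \<union> L)"
    using span_superset[of "W \<union> L"] by blast
  show ?thesis
  proof (rule transitive_along_unit_sphereI[OF G subspace_span])
    fix h
    assume h: "h \<in> span (W \<union> L)" "norm h = 1"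
    obtain p q where p: "p \<in> W" and q: "q \<in> orthogonal_comp W" and "h = p + q"
      using orthogonal_comp_decomp[OF W(1)] .
    have "orthogonal p q"
      using p q by (simp add: orthogonal_comp_def)
    then have "(norm h)\<^sup>2 = (norm p)\<^sup>2 + (norm q)\<^sup>2"
      unfolding \<open>h = p + q\<close> by (rule norm_add_Pythagorean)
    then have pyth: "(norm p)\<^sup>2 + (norm q)\<^sup>2 = 1"
      using h(2) by simp
    have to_frame: "moves_within G (span (W \<union> L)) h (norm p *\<^sub>R e1 + q)"
      using transitive_along_moves_to_line[OF W(3,1) p q e1(2) \<open>norm e1 = 1\<close>] \<open>h = p + q\<close>
        \<open>W \<subseteq> span (W \<union> L)\<close> by (simp add: moves_within_mono)
    show "moves_within G (span (W \<union> L)) h e1"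
    proof (cases "q = 0")
      case True
      then have "norm p = 1"
        using pyth norm_ge_zero[of p] by (auto simp: power2_eq_1_iff)
      then show ?thesis
        using to_frame True by simp
    next
      case False
      define n where "n = q /\<^sub>R norm q"
      have "q \<in> span (W \<union> L)"
        using h(1) p \<open>h = p + q\<close> \<open>W \<subseteq> span (W \<union> L)\<close> span_diff[of h "W \<union> L" p] by auto
      have n: "n \<in> span (W \<union> L)" "n \<in> orthogonal_comp W" "n \<bullet> n = 1"
        using q \<open>q \<in> span (W \<union> L)\<close> False
        by (simp_all add: n_def span_mul subspace_scale subspace_orthogonal_comp dot_square_norm
            power2_eq_square)
      have "moves_within G (span (W \<union> L)) (norm p *\<^sub>R e1 + norm q *\<^sub>R n) e1"
        using pyth by (intro moves_within_orthogonal_direction[OF G W L e1(2,3,1) n]) simp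
      then show ?thesis
        using moves_within_trans[OF G to_frame] False by (simp add: n_def)
    qed
  qed
qed

lemma transitive_along_span_UN:
  fixes L :: "'i \<Rightarrow> (real^'n) set"
  assumes G: "SO_subgroup G" and "finite I" "j \<in> I" "dim (L j) \<ge> 2"
    and L: "\<And>i. i \<in> I \<Longrightarrow> subspace (L i)" "\<And>i. i \<in> I \<Longrightarrow> transitive_along G (L i)"
    and meet: "\<And>i. i \<in> I \<Longrightarrow> L j \<inter> L i \<noteq> {0}"
  shows "transitive_along G (span (\<Union>i\<in>I. L i))"
proof -
  have partial: "transitive_along G (span (L j \<union> (\<Union>i\<in>J. L i)))" if "finite J" "J \<subseteq> I" for J
    using that
  proof (induction J rule: finite_subset_induct)
    case empty
    have "span (L j) = L j"
      using L(1)[OF \<open>j \<in> I\<close>] by (simp add: span_eq_iff)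
    then show ?case
      using L(2)[OF \<open>j \<in> I\<close>] by (simp del: span_eq_iff)
  next
    case (insert a J)
    define W where "W = span (L j \<union> (\<Union>i\<in>J. L i))"
    have "L j \<subseteq> W"
      unfolding W_def using span_superset[of "L j \<union> (\<Union>i\<in>J. L i)"] by blast
    then have "dim W \<ge> 2"
      using dim_subset \<open>dim (L j) \<ge> 2\<close> by (metis order_trans)
    obtain e where "e \<in> L j" "e \<in> L a" "e \<noteq> 0"
      using meet[OF \<open>a \<in> I\<close>] subspace_0[OF L(1)[OF \<open>j \<in> I\<close>]] subspace_0[OF L(1)[OF \<open>a \<in> I\<close>]]
      by blast
    have "transitive_along G (span (W \<union> L a))"
    proof (rule transitive_along_span_Un[OF G _ \<open>dim W \<ge> 2\<close> _ L(1,2)[OF \<open>a \<in> I\<close>] _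
          \<open>e \<in> L a\<close> \<open>e \<noteq> 0\<close>])
      show "subspace W" "transitive_along G W" "e \<in> W"
        using insert.IH \<open>L j \<subseteq> W\<close> \<open>e \<in> L j\<close> by (auto simp: W_def)
    qed
    moreover have "L j \<union> (\<Union>i\<in>J. L i) \<union> L a = L j \<union> (\<Union>i\<in>insert a J. L i)"
      by blast
    then have "span (W \<union> L a) = span (L j \<union> (\<Union>i\<in>insert a J. L i))"
      by (simp only: W_def span_Un_span)
    ultimately show ?case
      by simp
  qed
  have "L j \<union> (\<Union>i\<in>I. L i) = (\<Union>i\<in>I. L i)"
    using \<open>j \<in> I\<close> by blast
  then show ?thesis
    using partial[OF \<open>finite I\<close> order_refl] by simp
qed

lemma span_UNIV_if_transitive_on_sphere:
  fixes L :: "'i \<Rightarrow> (real^'n) set"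
  assumes "transitive_on_sphere (generated_subgroup (\<Union>i\<in>I. fixing_group (orthogonal_comp (L i))))"
  shows "span (\<Union>i\<in>I. L i) = UNIV"
proof (rule ccontr)
  define gens where "gens = (\<Union>i\<in>I. fixing_group (orthogonal_comp (L i)))"
  assume "span (\<Union>i\<in>I. L i) \<noteq> UNIV"
  then have "orthogonal_comp (\<Union>i\<in>I. L i) \<noteq> {0}"
    by (simp add: span_eq_UNIV_iff_orthogonal_comp)
  moreover have "0 \<in> orthogonal_comp (\<Union>i\<in>I. L i)"
    by (simp add: subspace_0 subspace_orthogonal_comp)
  ultimately obtain w where "w \<noteq> 0" "w \<in> orthogonal_comp (\<Union>i\<in>I. L i)"
    by blast
  then have "U *v w = w" if "U \<in> gens" for U
    using that orthogonal_comp_anti_mono[of "L _" "\<Union>i\<in>I. L i"]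
    unfolding gens_def fixing_group_def by blast
  moreover have "gens \<subseteq> SO"
    by (auto simp: gens_def fixing_group_def)
  ultimately have "U *v w = w" if "U \<in> generated_subgroup gens" for U
    using generated_subgroup_fixes_vector that by blast
  then show False
    using assms \<open>w \<noteq> 0\<close> not_transitive_on_sphere_if_fixed_vector unfolding gens_def by blast
qed

lemma transitive_on_sphere_if_span_UNIV:
  fixes L :: "'i \<Rightarrow> (real^'n) set"
  assumes "finite I" "j \<in> I"
    and L: "\<And>i. i \<in> I \<Longrightarrow> subspace (L i)" "\<And>i. i \<in> I \<Longrightarrow> dim (L i) \<ge> 2"
    and meet: "\<And>i. i \<in> I \<Longrightarrow> L j \<inter> L i \<noteq> {0}"
    and span: "span (\<Union>i\<in>I. L i) = UNIV"
  shows "transitive_on_sphere (generated_subgroup (\<Union>i\<in>I. fixing_group (orthogonal_comp (L i))))"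
proof -
  define gens where "gens = (\<Union>i\<in>I. fixing_group (orthogonal_comp (L i)))"
  define G where "G = generated_subgroup gens"
  have "gens \<subseteq> SO"
    by (auto simp: gens_def fixing_group_def)
  then have G: "SO_subgroup G"
    unfolding G_def by (rule SO_subgroup_generated_subgroup)
  have L_transitive: "transitive_along G (L i)" if "i \<in> I" for i
  proof (rule transitive_along_fixing_group[OF L[OF that]])
    show "fixing_group (orthogonal_comp (L i)) \<subseteq> G"
      using that generated_subgroup_superset[of gens] unfolding G_def gens_def by blast
  qed
  have "transitive_along G (span (\<Union>i\<in>I. L i))"
    by (rule transitive_along_span_UN[where L = L,
          OF G assms(1,2) L(2)[OF assms(2)] L(1) L_transitive meet])
  then show ?thesis
    unfolding G_def gens_def span by (rule transitive_on_sphere_if_transitive_along_UNIV)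
qed

theorem proposition1p5:
  fixes L :: "nat \<Rightarrow> (real^'n) set" and k :: nat
  assumes "CARD('n) \<ge> 2"
    and "\<And>i. i \<in> {1..k} \<Longrightarrow> subspace (L i)"
    and "\<And>i. i \<in> {1..k} \<Longrightarrow> dim (L i) \<ge> 2"
    and "\<And>i j. i \<in> {1..k} \<Longrightarrow> j \<in> {1..k} \<Longrightarrow> L i \<inter> L j \<noteq> {0}"
  shows "(transitive_on_sphere
            (generated_subgroup (\<Union>i\<in>{1..k}. fixing_group (orthogonal_comp (L i))))
          \<longleftrightarrow> span (\<Union>i\<in>{1..k}. L i) = UNIV)
       \<and> (span (\<Union>i\<in>{1..k}. L i) = UNIV
          \<longleftrightarrow> (\<Inter>i\<in>{1..k}. orthogonal_comp (L i)) = {0})"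
proof -
  have span_iff: "span (\<Union>i\<in>{1..k}. L i) = UNIV \<longleftrightarrow> (\<Inter>i\<in>{1..k}. orthogonal_comp (L i)) = {0}"
    unfolding span_eq_UNIV_iff_orthogonal_comp by (auto simp: orthogonal_comp_def)
  have "transitive_on_sphere (generated_subgroup (\<Union>i\<in>{1..k}. fixing_group (orthogonal_comp (L i))))"
    if span: "span (\<Union>i\<in>{1..k}. L i) = UNIV"
  proof -
    have "k \<noteq> 0"
    proof
      assume "k = 0"
      then have "(UNIV :: (real^'n) set) = {0}"
        using span by simp
      then have "(1 :: real^'n) = 0"
        by blast
      then show False
        by (simp add: vec_eq_iff)
    qed
    then have "1 \<in> {1..k}"
      by simp
    from transitive_on_sphere_if_span_UNIV
        [OF finite_atLeastAtMost this assms(2,3) assms(4)[OF this] span]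
    show ?thesis .
  qed
  then show ?thesis
    using span_iff span_UNIV_if_transitive_on_sphere[where L = L and I = "{1..k}"] by blast
qed

end
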